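(* Let $G$ be a connected graph and let $H$ be a hypergraph of degree 2. If $G^d$ is a hypergraph dilution of $H$, then $G$ is a minor of $H^d$.
   Context: A hypergraph $H$ is a pair $(V(H),E(H))$ with $E(H)\subseteq 2^{V(H)}$ a set; graphs are hypergraphs all of whose edges have size 2. For a vertex $v$, $I_v$ is the set of edges containing $v$; the degree of $H$ is $\max_v|I_v|$. The dual $H^d$ has $V(H^d)=E(H)$ and $E(H^d)=\{I_v : v\in V(H)\}$. A graph $G$ is a minor of a hypergraph $F$ if it is a minor of the primal graph of $F$ (vertices $V(F)$, $x,y$ adjacent iff some edge of $F$ contains both), i.e., there is $\mu:V(G)\to 2^{V(F)}$ with each $\mu(v)$ connected, the $\mu(v)$ pairwise disjoint, and for adjacent $u,v$ some primal edge joining $\mu(u)$ and $\mu(v)$. $H$ is a hypergraph dilution of $H'$ if $H$ is isomorphic to a hypergraph reachable from $H'$ by a finite sequence of: deleting a vertex (from the vertex set and all edges); deleting an edge that is a proper subset of another edge; merging on a vertex $v$, i.e., replacing all edges of $I_v$ by $(\bigcup I_v)\setminus\{v\}$. *)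

theory Defs
  imports Main
begin

type_synonym 'a hypergraph = "'a set \<times> 'a set set"

definition hverts :: "'a hypergraph \<Rightarrow> 'a set" where "hverts H = fst H"
definition hedges :: "'a hypergraph \<Rightarrow> 'a set set" where "hedges H = snd H"

definition is_hypergraph :: "'a hypergraph \<Rightarrow> bool" where
  "is_hypergraph H \<longleftrightarrow> finite (hverts H) \<and> hedges H \<subseteq> Pow (hverts H)"

definition is_graph :: "'a hypergraph \<Rightarrow> bool" where
  "is_graph G \<longleftrightarrow> is_hypergraph G \<and> (\<forall>e\<in>hedges G. card e = 2)"

definition inc :: "'a hypergraph \<Rightarrow> 'a \<Rightarrow> 'a set set" where
  "inc H v = {e \<in> hedges H. v \<in> e}"

definition hdegree :: "'a hypergraph \<Rightarrow> nat" where
  "hdegree H = Max ((\<lambda>v. card (inc H v)) ` hverts H)"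

definition hdual :: "'a hypergraph \<Rightarrow> 'a set hypergraph" where
  "hdual H = (hedges H, inc H ` hverts H)"

definition primal_adj :: "'a hypergraph \<Rightarrow> 'a \<Rightarrow> 'a \<Rightarrow> bool" where
  "primal_adj F x y \<longleftrightarrow> x \<in> hverts F \<and> y \<in> hverts F \<and> x \<noteq> y \<and>
     (\<exists>e\<in>hedges F. x \<in> e \<and> y \<in> e)"

definition primal_connected_set :: "'a hypergraph \<Rightarrow> 'a set \<Rightarrow> bool" where
  "primal_connected_set F S \<longleftrightarrow> S \<noteq> {} \<and> S \<subseteq> hverts F \<and>
     (\<forall>x\<in>S. \<forall>y\<in>S. (\<lambda>a b. primal_adj F a b \<and> a \<in> S \<and> b \<in> S)\<^sup>*\<^sup>* x y)"

definition graph_connected :: "'a hypergraph \<Rightarrow> bool" where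
  "graph_connected G \<longleftrightarrow> primal_connected_set G (hverts G)"

definition is_minor :: "'b hypergraph \<Rightarrow> 'a hypergraph \<Rightarrow> bool" where
  "is_minor G F \<longleftrightarrow> (\<exists>\<mu> :: 'b \<Rightarrow> 'a set.
     (\<forall>v\<in>hverts G. primal_connected_set F (\<mu> v)) \<and>
     (\<forall>u\<in>hverts G. \<forall>v\<in>hverts G. u \<noteq> v \<longrightarrow> \<mu> u \<inter> \<mu> v = {}) \<and>
     (\<forall>u v. primal_adj G u v \<longrightarrow> (\<exists>x\<in>\<mu> u. \<exists>y\<in>\<mu> v. primal_adj F x y)))"

inductive dilution_step :: "'a hypergraph \<Rightarrow> 'a hypergraph \<Rightarrow> bool" where
  del_vertex: "v \<in> hverts H \<Longrightarrow>
     dilution_step H (hverts H - {v}, (\<lambda>e. e - {v}) ` hedges H)"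
| del_edge: "e \<in> hedges H \<Longrightarrow> e' \<in> hedges H \<Longrightarrow> e \<subset> e' \<Longrightarrow>
     dilution_step H (hverts H, hedges H - {e})"
| merge: "v \<in> hverts H \<Longrightarrow>
     dilution_step H (hverts H, (hedges H - inc H v) \<union> {\<Union>(inc H v) - {v}})"

definition hiso :: "'a hypergraph \<Rightarrow> 'b hypergraph \<Rightarrow> bool" where
  "hiso H1 H2 \<longleftrightarrow> (\<exists>f. bij_betw f (hverts H1) (hverts H2) \<and>
     hedges H2 = (\<lambda>e. f ` e) ` hedges H1)"

definition is_dilution :: "'b hypergraph \<Rightarrow> 'a hypergraph \<Rightarrow> bool" where
  "is_dilution H H' \<longleftrightarrow> (\<exists>K. dilution_step\<^sup>*\<^sup>* H' K \<and> hiso H K)"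

end

theory Submission
  imports Defs
begin

(* Follow the dilution sequence from H to the dual of G and carry along, for every
   nonempty edge f of the current hypergraph, a connected set M f of vertices of the
   dual of H, such that distinct edges get disjoint sets and intersecting edges get
   touching sets. Initially M f = {f}. Deleting a vertex or a dominated edge only
   shrinks or forgets edges, and merging on v replaces the edges through v, which
   pairwise intersect, by one edge carried by the union of their (pairwise touching)
   sets. At the end the edges are the incidence sets I_u of the vertices u of G, and
   I_u meets I_u' exactly when u and u' are adjacent, so u |-> M (I_u) is a minor
   model of G, unless I_u = I_u' for distinct u, u', or I_u is empty. For a
   connected graph G this only happens when G has at most two vertices, and then
   degree 2 supplies an edge of the dual of H. *)

lemma hverts_hdual [simp]: "hverts (hdual H) = hedges H"
  and hedges_hdual [simp]: "hedges (hdual H) = inc H ` hverts H"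
  by (simp_all add: hdual_def hverts_def hedges_def)

lemma primal_adj_sym: "primal_adj F x y \<Longrightarrow> primal_adj F y x"
  unfolding primal_adj_def by blast

lemma primal_connected_set_singleton:
  "x \<in> hverts F \<Longrightarrow> primal_connected_set F {x}"
  by (simp add: primal_connected_set_def)

lemma rtranclp_restrict_mono:
  assumes "(\<lambda>a b. r a b \<and> a \<in> S \<and> b \<in> S)\<^sup>*\<^sup>* x y" and "S \<subseteq> T"
  shows "(\<lambda>a b. r a b \<and> a \<in> T \<and> b \<in> T)\<^sup>*\<^sup>* x y"
proof -
  have "(\<lambda>a b. r a b \<and> a \<in> S \<and> b \<in> S) \<le> (\<lambda>a b. r a b \<and> a \<in> T \<and> b \<in> T)"
    using assms(2) by auto
  from predicate2D[OF rtranclp_mono[OF this] assms(1)] show ?thesis .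
qed

lemma primal_connected_set_UN:
  assumes "I \<noteq> {}"
    and conn: "\<And>i. i \<in> I \<Longrightarrow> primal_connected_set F (A i)"
    and touch: "\<And>i j. i \<in> I \<Longrightarrow> j \<in> I \<Longrightarrow> i \<noteq> j \<Longrightarrow> \<exists>x\<in>A i. \<exists>y\<in>A j. primal_adj F x y"
  shows "primal_connected_set F (\<Union>i\<in>I. A i)"
proof -
  let ?T = "\<Union>i\<in>I. A i"
  let ?R = "\<lambda>a b. primal_adj F a b \<and> a \<in> ?T \<and> b \<in> ?T"
  have within: "?R\<^sup>*\<^sup>* x y" if i: "i \<in> I" and xy: "x \<in> A i" "y \<in> A i" for i x y
  proof (rule rtranclp_restrict_mono)
    show "(\<lambda>a b. primal_adj F a b \<and> a \<in> A i \<and> b \<in> A i)\<^sup>*\<^sup>* x y"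
      using conn[OF i] xy unfolding primal_connected_set_def by blast
    show "A i \<subseteq> ?T"
      using i by blast
  qed
  have conn_T: "?R\<^sup>*\<^sup>* x y" if xy: "x \<in> ?T" "y \<in> ?T" for x y
  proof -
    obtain i j where ij: "i \<in> I" "x \<in> A i" "j \<in> I" "y \<in> A j"
      using xy by blast
    show ?thesis
    proof (cases "i = j")
      case True
      with ij show ?thesis
        using within[of i x y] by simp
    next
      case False
      then obtain x' y' where x'y': "x' \<in> A i" "y' \<in> A j" "primal_adj F x' y'"
        using touch ij by blast
      have "?R x' y'"
        using ij x'y' by blast
      with within[OF ij(1,2) x'y'(1)] have "?R\<^sup>*\<^sup>* x y'"
        by (rule rtranclp.rtrancl_into_rtrancl)
      then show ?thesis
        using within[OF ij(3) x'y'(2) ij(4)] by (rule rtranclp_trans)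
    qed
  qed
  obtain i where i: "i \<in> I"
    using assms(1) by blast
  then have "A i \<noteq> {}"
    using conn by (simp add: primal_connected_set_def)
  with i have "?T \<noteq> {}"
    by blast
  moreover have "?T \<subseteq> hverts F"
    using conn unfolding primal_connected_set_def by blast
  ultimately show ?thesis
    unfolding primal_connected_set_def by (intro conjI ballI conn_T)
qed

(* M is a minor model, in the primal graph of F, of the intersection graph of the
   nonempty members of E. *)
definition intersection_model :: "'c hypergraph \<Rightarrow> 'a set set \<Rightarrow> ('a set \<Rightarrow> 'c set) \<Rightarrow> bool" where
  "intersection_model F E M \<longleftrightarrow>
     (\<forall>f\<in>E. f \<noteq> {} \<longrightarrow> primal_connected_set F (M f)) \<and>
     (\<forall>f\<in>E. \<forall>g\<in>E. f \<noteq> {} \<longrightarrow> g \<noteq> {} \<longrightarrow> f \<noteq> g \<longrightarrow> M f \<inter> M g = {}) \<and>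
     (\<forall>f\<in>E. \<forall>g\<in>E. f \<noteq> g \<longrightarrow> f \<inter> g \<noteq> {} \<longrightarrow> (\<exists>x\<in>M f. \<exists>y\<in>M g. primal_adj F x y))"

lemma intersection_modelI:
  assumes "\<And>f. f \<in> E \<Longrightarrow> f \<noteq> {} \<Longrightarrow> primal_connected_set F (M f)"
    and "\<And>f g. f \<in> E \<Longrightarrow> g \<in> E \<Longrightarrow> f \<noteq> {} \<Longrightarrow> g \<noteq> {} \<Longrightarrow> f \<noteq> g \<Longrightarrow> M f \<inter> M g = {}"
    and "\<And>f g. f \<in> E \<Longrightarrow> g \<in> E \<Longrightarrow> f \<noteq> g \<Longrightarrow> f \<inter> g \<noteq> {} \<Longrightarrow>
           \<exists>x\<in>M f. \<exists>y\<in>M g. primal_adj F x y"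
  shows "intersection_model F E M"
  unfolding intersection_model_def by (intro conjI ballI impI assms)

lemma intersection_modelD:
  assumes "intersection_model F E M"
  shows intersection_model_connected:
      "\<And>f. f \<in> E \<Longrightarrow> f \<noteq> {} \<Longrightarrow> primal_connected_set F (M f)"
    and intersection_model_disjoint:
      "\<And>f g. f \<in> E \<Longrightarrow> g \<in> E \<Longrightarrow> f \<noteq> {} \<Longrightarrow> g \<noteq> {} \<Longrightarrow> f \<noteq> g \<Longrightarrow> M f \<inter> M g = {}"
    and intersection_model_touch:
      "\<And>f g. f \<in> E \<Longrightarrow> g \<in> E \<Longrightarrow> f \<noteq> g \<Longrightarrow> f \<inter> g \<noteq> {} \<Longrightarrow>
         \<exists>x\<in>M f. \<exists>y\<in>M g. primal_adj F x y"
  using assms unfolding intersection_model_def by simp_all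

lemma intersection_model_hdual:
  assumes "is_hypergraph H"
  shows "intersection_model (hdual H) (hedges H) (\<lambda>f. {f})"
proof (rule intersection_modelI)
  fix f g assume fg: "f \<in> hedges H" "g \<in> hedges H" "f \<noteq> g" "f \<inter> g \<noteq> {}"
  then obtain w where w: "w \<in> f" "w \<in> g"
    by blast
  then have "w \<in> hverts H"
    using assms fg(1) unfolding is_hypergraph_def by blast
  moreover have "f \<in> inc H w" "g \<in> inc H w"
    using fg w by (simp_all add: inc_def)
  ultimately have "primal_adj (hdual H) f g"
    using fg unfolding primal_adj_def by auto
  then show "\<exists>x\<in>{f}. \<exists>y\<in>{g}. primal_adj (hdual H) x y"
    by blast
qed (simp_all add: primal_connected_set_singleton)

lemma intersection_model_subset:
  assumes "intersection_model F E M" and "E' \<subseteq> E"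
  shows "intersection_model F E' M"
  using assms unfolding intersection_model_def by (meson subsetD)

lemma intersection_model_shrink:
  assumes model: "intersection_model F E M" and shrink: "\<And>f. f \<in> E \<Longrightarrow> h f \<subseteq> f"
  shows "intersection_model F (h ` E) (M \<circ> inv_into E h)"
proof -
  let ?p = "inv_into E h"
  have p: "?p g \<in> E" "g \<subseteq> ?p g" if "g \<in> h ` E" for g
    using that shrink inv_into_into f_inv_into_f by metis+
  show ?thesis
  proof (rule intersection_modelI)
    fix f assume "f \<in> h ` E" "f \<noteq> {}"
    then show "primal_connected_set F ((M \<circ> ?p) f)"
      using p intersection_model_connected[OF model] by fastforce
  next
    fix f g assume fg: "f \<in> h ` E" "g \<in> h ` E" "f \<noteq> {}" "g \<noteq> {}" "f \<noteq> g"
    then have "?p f \<noteq> ?p g"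
      by (metis f_inv_into_f)
    with fg show "(M \<circ> ?p) f \<inter> (M \<circ> ?p) g = {}"
      using p intersection_model_disjoint[OF model] by (metis comp_apply subset_empty)
  next
    fix f g assume fg: "f \<in> h ` E" "g \<in> h ` E" "f \<noteq> g" "f \<inter> g \<noteq> {}"
    then have "?p f \<noteq> ?p g" "?p f \<inter> ?p g \<noteq> {}"
      using p by (metis f_inv_into_f, blast)
    with fg show "\<exists>x\<in>(M \<circ> ?p) f. \<exists>y\<in>(M \<circ> ?p) g. primal_adj F x y"
      using p intersection_model_touch[OF model] by simp
  qed
qed

(* Pairwise intersecting members of E form a clique of the intersection graph, so the
   union of their sets is connected. *)
lemma intersection_model_merge_clique:
  assumes model: "intersection_model F E M" and "I \<subseteq> E"
    and clique: "\<And>f g. f \<in> I \<Longrightarrow> g \<in> I \<Longrightarrow> f \<inter> g \<noteq> {}"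
  shows "intersection_model F ((E - I) \<union> {\<Union>I})
           (\<lambda>g. if g = \<Union>I then \<Union>(M ` I) else M g)"
proof -
  note conn = intersection_model_connected[OF model]
    and disj = intersection_model_disjoint[OF model]
    and touch = intersection_model_touch[OF model]
  have I: "f \<in> E" "f \<noteq> {}" if "f \<in> I" for f
    using that \<open>I \<subseteq> E\<close> clique[of f f] by auto
  have union_conn: "primal_connected_set F (\<Union>(M ` I))" if "\<Union>I \<noteq> {}"
  proof (rule primal_connected_set_UN)
    show "I \<noteq> {}"
      using that by blast
    show "primal_connected_set F (M f)" if "f \<in> I" for f
      using conn I that by blast
    show "\<exists>x\<in>M f. \<exists>y\<in>M g. primal_adj F x y" if "f \<in> I" "g \<in> I" "f \<noteq> g" for f g
      using touch[of f g] I clique that by blast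
  qed
  have union_disj: "M g \<inter> \<Union>(M ` I) = {}" if g: "g \<in> E - I" "g \<noteq> {}" for g
  proof -
    have "M g \<inter> M f = {}" if f: "f \<in> I" for f
      using g f I[OF f] by (intro disj) auto
    then show ?thesis
      by blast
  qed
  have union_touch: "\<exists>x\<in>M g. \<exists>y\<in>\<Union>(M ` I). primal_adj F x y"
    if g: "g \<in> E - I" "g \<inter> \<Union>I \<noteq> {}" for g
  proof -
    obtain f where f: "f \<in> I" "g \<inter> f \<noteq> {}"
      using g by blast
    then have "\<exists>x\<in>M g. \<exists>y\<in>M f. primal_adj F x y"
      using g I[OF f(1)] by (intro touch) auto
    with f show ?thesis
      by blast
  qed
  let ?M' = "\<lambda>g. if g = \<Union>I then \<Union>(M ` I) else M g"
  have old: "g \<in> E - I" "?M' g = M g" if "g \<in> (E - I) \<union> {\<Union>I}" "g \<noteq> \<Union>I" for g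
    using that by auto
  show ?thesis
  proof (rule intersection_modelI)
    fix f assume "f \<in> (E - I) \<union> {\<Union>I}" "f \<noteq> {}"
    then show "primal_connected_set F (?M' f)"
      using old conn union_conn by (cases "f = \<Union>I") auto
  next
    fix f g assume fg: "f \<in> (E - I) \<union> {\<Union>I}" "g \<in> (E - I) \<union> {\<Union>I}"
      "f \<noteq> {}" "g \<noteq> {}" "f \<noteq> g"
    then consider "f = \<Union>I" "g \<noteq> \<Union>I" | "f \<noteq> \<Union>I" "g = \<Union>I" | "f \<noteq> \<Union>I" "g \<noteq> \<Union>I"
      by blast
    then show "?M' f \<inter> ?M' g = {}"
    proof cases
      case 1
      then show ?thesis
        using old[OF fg(2)] union_disj fg(4) by auto
    next
      case 2
      then show ?thesis
        using old[OF fg(1)] union_disj fg(3) by auto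
    next
      case 3
      then show ?thesis
        using old[OF fg(1)] old[OF fg(2)] disj fg(3-5) by auto
    qed
  next
    fix f g assume fg: "f \<in> (E - I) \<union> {\<Union>I}" "g \<in> (E - I) \<union> {\<Union>I}"
      "f \<noteq> g" "f \<inter> g \<noteq> {}"
    then consider "f = \<Union>I" "g \<noteq> \<Union>I" | "f \<noteq> \<Union>I" "g = \<Union>I" | "f \<noteq> \<Union>I" "g \<noteq> \<Union>I"
      by blast
    then show "\<exists>x\<in>?M' f. \<exists>y\<in>?M' g. primal_adj F x y"
    proof cases
      case 1
      then have "g \<in> E - I" "g \<inter> \<Union>I \<noteq> {}"
        using old(1)[OF fg(2)] fg(4) by auto
      then obtain x y where xy: "x \<in> M g" "y \<in> \<Union>(M ` I)" "primal_adj F x y"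
        using union_touch by blast
      have "?M' f = \<Union>(M ` I)" "?M' g = M g"
        using 1 old(2)[OF fg(2) 1(2)] by simp_all
      then show ?thesis
        using xy primal_adj_sym[OF xy(3)] by blast
    next
      case 2
      then show ?thesis
        using old[OF fg(1)] union_touch fg(4) by auto
    next
      case 3
      then show ?thesis
        using old[OF fg(1)] old[OF fg(2)] touch fg(3,4) by auto
    qed
  qed
qed

lemma intersection_model_dilution_step:
  assumes "dilution_step K K'" and model: "intersection_model F (hedges K) M"
  shows "\<exists>M'. intersection_model F (hedges K') M'"
  using assms(1)
proof cases
  case (del_vertex v)
  then show ?thesis
    using intersection_model_shrink[OF model, of "\<lambda>e. e - {v}"] by (auto simp: hedges_def)
next
  case del_edge
  then show ?thesis
    using intersection_model_subset[OF model] by (auto simp: hedges_def)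
next
  case (merge v)
  let ?I = "inc K v"
  (* merge the clique ?I into its union, then delete v, which lies in no other edge *)
  obtain M' where "intersection_model F ((hedges K - ?I) \<union> {\<Union>?I}) M'"
    using intersection_model_merge_clique[OF model, of ?I] by (fastforce simp: inc_def)
  from intersection_model_shrink[OF this, of "\<lambda>e. e - {v}"]
  obtain M'' where "intersection_model F ((\<lambda>e. e - {v}) ` ((hedges K - ?I) \<union> {\<Union>?I})) M''"
    by blast
  moreover have "(\<lambda>e. e - {v}) ` ((hedges K - ?I) \<union> {\<Union>?I}) = hedges K'"
    using merge by (force simp: hedges_def inc_def)
  ultimately show ?thesis
    by auto
qed

lemma intersection_model_dilution:
  assumes "dilution_step\<^sup>*\<^sup>* H K" and "intersection_model F (hedges H) M"
  shows "\<exists>M'. intersection_model F (hedges K) M'"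
  using assms by (induction rule: rtranclp_induct) (auto dest: intersection_model_dilution_step)

lemma intersection_model_hiso:
  assumes "hiso K' K" and "hedges K' \<subseteq> Pow (hverts K')"
    and model: "intersection_model F (hedges K) M"
  shows "\<exists>M'. intersection_model F (hedges K') M'"
proof -
  obtain \<phi> where \<phi>: "inj_on \<phi> (hverts K')" "hedges K = (\<lambda>e. \<phi> ` e) ` hedges K'"
    using assms(1) unfolding hiso_def bij_betw_def by blast
  have "inj_on (\<lambda>e. \<phi> ` e) (hedges K')"
    using \<phi>(1) assms(2) inj_on_image_eq_iff by (fastforce simp: inj_on_def)
  moreover have "\<phi> ` f \<inter> \<phi> ` g \<noteq> {}" if "f \<inter> g \<noteq> {}" for f g
    using that by blast
  ultimately have "intersection_model F (hedges K') (\<lambda>e. M (\<phi> ` e))"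
    using model unfolding intersection_model_def \<phi>(2) by (simp add: inj_on_eq_iff)
  then show ?thesis
    by blast
qed

lemma hdual_hedges_subset_Pow: "hedges (hdual G) \<subseteq> Pow (hverts (hdual G))"
  by (auto simp: inc_def)

lemma is_minor_of_intersection_model_hdual:
  assumes model: "intersection_model F (hedges (hdual G)) M"
    and nonempty: "\<And>v. v \<in> hverts G \<Longrightarrow> inc G v \<noteq> {}"
    and inj: "inj_on (inc G) (hverts G)"
  shows "is_minor G F"
  unfolding is_minor_def
proof (intro exI[of _ "M \<circ> inc G"] conjI ballI allI impI)
  fix v assume "v \<in> hverts G"
  then show "primal_connected_set F ((M \<circ> inc G) v)"
    using nonempty by (simp add: intersection_model_connected[OF model])
next
  fix u v assume "u \<in> hverts G" "v \<in> hverts G" "u \<noteq> v"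
  then show "(M \<circ> inc G) u \<inter> (M \<circ> inc G) v = {}"
    using nonempty inj by (simp add: intersection_model_disjoint[OF model] inj_on_eq_iff)
next
  fix u v assume "primal_adj G u v"
  then obtain e where uv: "u \<in> hverts G" "v \<in> hverts G" "u \<noteq> v"
    and "e \<in> inc G u \<inter> inc G v"
    unfolding primal_adj_def inc_def by blast
  then have "inc G u \<inter> inc G v \<noteq> {}" "inc G u \<noteq> inc G v"
    using inj by (auto simp: inj_on_eq_iff)
  with uv show "\<exists>x\<in>(M \<circ> inc G) u. \<exists>y\<in>(M \<circ> inc G) v. primal_adj F x y"
    by (simp add: intersection_model_touch[OF model])
qed

lemma is_minor_if_hverts_subset_singleton:
  assumes "x \<in> hverts F" and "hverts G \<subseteq> {u}"
  shows "is_minor G F"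
  unfolding is_minor_def
proof (intro exI[of _ "\<lambda>_. {x}"] conjI ballI allI impI)
  fix a b assume "primal_adj G a b"
  with assms(2) have False
    unfolding primal_adj_def by auto
  then show "\<exists>x'\<in>{x}. \<exists>y'\<in>{x}. primal_adj F x' y'" ..
qed (use assms in \<open>auto simp: primal_connected_set_singleton\<close>)

lemma is_minor_if_hverts_subset_pair:
  assumes xy: "primal_adj F x y" and "hverts G \<subseteq> {u, v}"
  shows "is_minor G F"
  unfolding is_minor_def
proof (intro exI[of _ "\<lambda>w. if w = u then {x} else {y}"] conjI ballI allI impI)
  have "x \<in> hverts F" "y \<in> hverts F" "x \<noteq> y"
    using xy unfolding primal_adj_def by auto
  then show "primal_connected_set F (if w = u then {x} else {y})" for w
    by (simp add: primal_connected_set_singleton)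
  show "(if a = u then {x} else {y}) \<inter> (if b = u then {x} else {y}) = {}"
    if "a \<in> hverts G" "b \<in> hverts G" "a \<noteq> b" for a b
    using that assms(2) \<open>x \<noteq> y\<close> by auto
next
  fix a b assume "primal_adj G a b"
  then have "a \<in> {u, v}" "b \<in> {u, v}" "a \<noteq> b"
    using assms(2) unfolding primal_adj_def by auto
  then show "\<exists>x'\<in>(if a = u then {x} else {y}). \<exists>y'\<in>(if b = u then {x} else {y}). primal_adj F x' y'"
    using xy primal_adj_sym[OF xy] by auto
qed

lemma hdual_primal_adj_if_hdegree_2:
  assumes "is_hypergraph H" and "hdegree H = 2" and "hverts H \<noteq> {}"
  obtains x y where "primal_adj (hdual H) x y"
proof -
  have "hdegree H \<in> (\<lambda>v. card (inc H v)) ` hverts H"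
    using assms(1,3) unfolding hdegree_def is_hypergraph_def by (intro Max_in) auto
  then obtain w where w: "w \<in> hverts H" "card (inc H w) = 2"
    using assms(2) by auto
  then obtain x y where "inc H w = {x, y}" "x \<noteq> y"
    by (meson card_2_iff)
  with w have "primal_adj (hdual H) x y"
    unfolding primal_adj_def by (auto simp: inc_def)
  then show thesis
    by (rule that)
qed

lemma dilution_step_hverts_nonempty:
  assumes "dilution_step H K" and "is_hypergraph H"
  shows "hverts H \<noteq> {}"
  using assms(1)
proof cases
  case (del_edge e e')
  then show ?thesis
    using assms(2) unfolding is_hypergraph_def by blast
qed auto

lemma dilution_of_vertexless:
  assumes "dilution_step\<^sup>*\<^sup>* H K" and "is_hypergraph H" and "hverts H = {}"
  shows "K = H"
  using assms(1)
  by (cases rule: converse_rtranclpE) (use assms(2,3) dilution_step_hverts_nonempty in blast)+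

lemma graph_connected_inc_nonempty:
  assumes "graph_connected G" and "u \<in> hverts G" "v \<in> hverts G" "u \<noteq> v"
  shows "inc G v \<noteq> {}"
proof -
  have "(\<lambda>a b. primal_adj G a b \<and> a \<in> hverts G \<and> b \<in> hverts G)\<^sup>*\<^sup>* v u"
    using assms unfolding graph_connected_def primal_connected_set_def by blast
  then show ?thesis
  proof (cases rule: converse_rtranclpE)
    case base
    with assms(4) show ?thesis
      by simp
  next
    case (step w)
    then show ?thesis
      unfolding primal_adj_def inc_def by auto
  qed
qed

(* Since edges have exactly two ends, a common edge of twins u, v is {u, v}, and no
   path can leave {u, v}. *)
lemma graph_connected_twins:
  assumes "is_graph G" and "graph_connected G"
    and "u \<in> hverts G" "v \<in> hverts G" "u \<noteq> v" and twins: "inc G u = inc G v"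
  shows "hverts G = {u, v}"
proof -
  let ?R = "\<lambda>a b. primal_adj G a b \<and> a \<in> hverts G \<and> b \<in> hverts G"
  have "w \<in> {u, v}" if "?R\<^sup>*\<^sup>* u w" for w
    using that
  proof (induction rule: rtranclp_induct)
    case (step z w)
    then obtain e where e: "e \<in> hedges G" "z \<in> e" "w \<in> e"
      unfolding primal_adj_def by blast
    then have "e \<in> inc G u" "e \<in> inc G v"
      using step.IH twins by (auto simp: inc_def)
    then have "u \<in> e" "v \<in> e"
      by (simp_all add: inc_def)
    moreover obtain p q where "e = {p, q}"
      using assms(1) e(1) card_2_iff unfolding is_graph_def by metis
    ultimately show ?case
      using e(3) assms(5) by auto
  qed simp
  moreover have "?R\<^sup>*\<^sup>* u w" if "w \<in> hverts G" for w
    using assms(2,3) that unfolding graph_connected_def primal_connected_set_def by blast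
  ultimately show ?thesis
    using assms(3,4) by blast
qed

lemma is_minor_hdual_if_hverts_subset_pair:
  assumes "graph_connected G" and "is_hypergraph H" and "hdegree H = 2"
    and "is_dilution (hdual G) H" and "hverts G \<subseteq> {u, v}"
  shows "is_minor G (hdual H)"
proof (cases "hverts H = {}")
  case False
  with assms(2,3) obtain x y where "primal_adj (hdual H) x y"
    by (rule hdual_primal_adj_if_hdegree_2)
  then show ?thesis
    using assms(5) by (rule is_minor_if_hverts_subset_pair)
next
  case True
  obtain K where "dilution_step\<^sup>*\<^sup>* H K" "hiso (hdual G) K"
    using assms(4) unfolding is_dilution_def by blast
  then have "hiso (hdual G) H"
    using dilution_of_vertexless assms(2) True by blast
  then obtain \<phi> where \<phi>: "bij_betw \<phi> (hedges G) {}" "hedges H = (\<lambda>e. \<phi> ` e) ` inc G ` hverts G"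
    using True unfolding hiso_def by auto
  then have no_edges: "inc G w = {}" for w
    by (auto simp: bij_betw_def inc_def)
  obtain w where w: "w \<in> hverts G"
    using assms(1) unfolding graph_connected_def primal_connected_set_def by blast
  then have "hverts G \<subseteq> {w}"
    using graph_connected_inc_nonempty[OF assms(1)] no_edges by blast
  moreover have "{} \<in> hverts (hdual H)"
    using \<phi>(2) w no_edges by auto
  ultimately show ?thesis
    by (intro is_minor_if_hverts_subset_singleton)
qed

theorem lemmaA1:
  fixes G :: "'b hypergraph" and H :: "'a hypergraph"
  assumes "is_graph G" and "graph_connected G"
    and "is_hypergraph H" and "hdegree H = 2"
    and "is_dilution (hdual G) H"
  shows "is_minor G (hdual H)"
proof (cases "\<exists>u v. hverts G \<subseteq> {u, v}")
  case True
  then obtain u v where "hverts G \<subseteq> {u, v}"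
    by blast
  with assms(2-5) show ?thesis
    by (rule is_minor_hdual_if_hverts_subset_pair)
next
  case False
  obtain K where K: "dilution_step\<^sup>*\<^sup>* H K" "hiso (hdual G) K"
    using assms(5) unfolding is_dilution_def by blast
  obtain M where M: "intersection_model (hdual H) (hedges (hdual G)) M"
    using intersection_model_dilution[OF K(1) intersection_model_hdual[OF assms(3)]]
      intersection_model_hiso[OF K(2) hdual_hedges_subset_Pow] by blast
  have "inc G v \<noteq> {}" if "v \<in> hverts G" for v
    using False that graph_connected_inc_nonempty[OF assms(2)] by blast
  moreover have "inj_on (inc G) (hverts G)"
  proof (rule inj_onI)
    fix u v assume "u \<in> hverts G" "v \<in> hverts G" "inc G u = inc G v"
    then show "u = v"
      using False graph_connected_twins[OF assms(1,2)] by blast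
  qed
  ultimately show ?thesis
    using M by (rule is_minor_of_intersection_model_hdual[rotated])
qed

end
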